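(* Fix an integer $\Delta\ge3$. For $k\ge1$ let $T_k$ be the $(\Delta-1)$-ary tree of depth $k$, and let $\mathcal{T}=\{T_k: k\ge1\}$. Then for every real $d>1$, $\mu_{\log}(\mathcal{T})\le d$.
   Context: The $(\Delta-1)$-ary tree of depth $k$ is the rooted tree in which every vertex at depth less than $k$ has exactly $\Delta-1$ children and all leaves are at depth $k$. A self-avoiding walk (SAW) of length $i$ from $v$ is a walk $v=v_0,\dots,v_i$ with all vertices distinct; $\mathcal{N}_{\le \ell}(G,v)$ is the number of SAWs of length between $1$ and $\ell$ starting at $v$. For a family $\mathcal{H}$ of finite graphs, "$\mu_{\log}(\mathcal{H})\le d$" (log-depth connective constant at most $d$) means: there exist constants $a,c$ such that for every $G=(V,E)\in\mathcal{H}$, every $v\in V$, and every $\ell\ge a\log|V|$, one has $\mathcal{N}_{\le\ell}(G,v)\le c\,d^{\ell}$. *)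

theory Defs
  imports Complex_Main
begin

text \<open>A finite graph is given by a vertex set V and a symmetric adjacency relation E
  (only edges between vertices of V matter).\<close>

definition saws :: "'a set \<Rightarrow> ('a \<Rightarrow> 'a \<Rightarrow> bool) \<Rightarrow> 'a \<Rightarrow> nat \<Rightarrow> 'a list set" where
  "saws V E v i = {p. length p = Suc i \<and> hd p = v \<and> distinct p \<and> set p \<subseteq> V \<and>
                      (\<forall>j<i. E (p ! j) (p ! Suc j))}"

definition N_le :: "'a set \<Rightarrow> ('a \<Rightarrow> 'a \<Rightarrow> bool) \<Rightarrow> 'a \<Rightarrow> nat \<Rightarrow> nat" where
  "N_le V E v l = card (\<Union>i\<in>{1..l}. saws V E v i)"

definition mu_log_le :: "('a set \<times> ('a \<Rightarrow> 'a \<Rightarrow> bool)) set \<Rightarrow> real \<Rightarrow> bool" where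
  "mu_log_le H d \<longleftrightarrow> (\<exists>a c :: real. \<forall>(V, E) \<in> H. \<forall>v\<in>V. \<forall>l::nat.
       real l \<ge> a * ln (real (card V)) \<longrightarrow> real (N_le V E v l) \<le> c * d ^ l)"

text \<open>The (Delta-1)-ary tree of depth k: vertices are words over {0..<Delta-1} of length
  at most k (the root is the empty word); children of u are u @ [i].\<close>
definition tree_verts :: "nat \<Rightarrow> nat \<Rightarrow> nat list set" where
  "tree_verts \<Delta> k = {xs. length xs \<le> k \<and> set xs \<subseteq> {0..<\<Delta> - 1}}"

definition tree_adj :: "nat list \<Rightarrow> nat list \<Rightarrow> bool" where
  "tree_adj u v \<longleftrightarrow> (\<exists>i. v = u @ [i]) \<or> (\<exists>i. u = v @ [i])"

definition tree_family :: "nat \<Rightarrow> (nat list set \<times> (nat list \<Rightarrow> nat list \<Rightarrow> bool)) set" where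
  "tree_family \<Delta> = {(tree_verts \<Delta> k, tree_adj) | k. k \<ge> 1}"

end

theory Submission
  imports Defs "HOL-Library.Sublist"
begin

text \<open>In the word tree a self-avoiding walk from v to w first climbs through prefixes of v
  and then descends through prefixes of w; a step down followed by a step up would revisit a
  vertex. The turning vertex is the longest common prefix of v and w, so the walk is determined
  by its endpoint and there are at most |V| of them. Then l \<ge> ln |V| / ln d gives
  |V| \<le> d^l; neither \<Delta> \<ge> 3 nor the depth of the tree matters.\<close>

lemma longest_common_prefix_eq_take:
  assumes "take n xs = take n ys" "n \<le> length xs" "n \<le> length ys"
    and "n = length xs \<or> n = length ys \<or> xs ! n \<noteq> ys ! n"
  shows "longest_common_prefix xs ys = take n xs"
  using assms
proof (induction xs ys arbitrary: n rule: longest_common_prefix.induct)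
  case (1 x xs y ys)
  then show ?case by (cases n) auto
qed auto

lemma snoc_chain_take:
  assumes "\<And>n. n < m \<Longrightarrow> \<exists>x. ws ! n = ws ! Suc n @ [x]" and "j \<le> m"
  shows "ws ! j = take (length (ws ! 0) - j) (ws ! 0)"
  using assms(2)
proof (induction j)
  case 0
  then show ?case by simp
next
  case (Suc j)
  with assms(1)[of j] obtain x where "ws ! j = ws ! Suc j @ [x]" by auto
  then have "ws ! Suc j = butlast (ws ! j)" by simp
  with Suc show ?case by (simp add: butlast_take)
qed

lemma snoc_chain_append:
  assumes "\<And>n. j \<le> n \<Longrightarrow> n < i \<Longrightarrow> \<exists>x. ws ! Suc n = ws ! n @ [x]" and "j \<le> i"
  shows "\<exists>zs. ws ! i = ws ! j @ zs \<and> length zs = i - j"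
  using assms(2)
proof (induction j rule: inc_induct)
  case base
  then show ?case by simp
next
  case (step n)
  with assms(1)[of n] obtain x where "ws ! Suc n = ws ! n @ [x]" by auto
  with step.IH obtain zs where "ws ! i = ws ! n @ x # zs" "length zs = i - Suc n" by auto
  with step.hyps show ?case by (intro exI[of _ "x # zs"]) auto
qed

lemma sawsD:
  assumes "p \<in> saws V E v i"
  shows "length p = Suc i" "p ! 0 = v" "distinct p" "set p \<subseteq> V" "last p = p ! i"
    and "\<And>j. j < i \<Longrightarrow> E (p ! j) (p ! Suc j)"
proof -
  from assms have "p \<noteq> []" unfolding saws_def by auto
  with assms show "length p = Suc i" "p ! 0 = v" "distinct p" "set p \<subseteq> V" "last p = p ! i"
    and "\<And>j. j < i \<Longrightarrow> E (p ! j) (p ! Suc j)"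
    unfolding saws_def by (auto simp: hd_conv_nth last_conv_nth)
qed

lemma saw_tree_down_step_persists:
  assumes p: "p \<in> saws V tree_adj v i" and "Suc j < i" and "p ! Suc j = p ! j @ [x]"
  shows "\<exists>y. p ! Suc (Suc j) = p ! Suc j @ [y]"
proof (rule ccontr)
  assume "\<not> ?thesis"
  with sawsD(6)[OF p \<open>Suc j < i\<close>] obtain y where "p ! Suc j = p ! Suc (Suc j) @ [y]"
    unfolding tree_adj_def by auto
  with \<open>p ! Suc j = p ! j @ [x]\<close> have "p ! Suc (Suc j) = p ! j"
    by (metis butlast_snoc)
  with sawsD(1,3)[OF p] \<open>Suc j < i\<close> show False
    by (simp add: nth_eq_iff_index_eq)
qed

lemma saw_tree_up_then_down:
  assumes p: "p \<in> saws V tree_adj v i"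
  obtains m where "m \<le> i"
    and "\<And>j. j < m \<Longrightarrow> \<exists>x. p ! j = p ! Suc j @ [x]"
    and "\<And>j. m \<le> j \<Longrightarrow> j < i \<Longrightarrow> \<exists>x. p ! Suc j = p ! j @ [x]"
proof
  define down where "down j \<longleftrightarrow> (\<exists>x. p ! Suc j = p ! j @ [x])" for j
  define m where "m = (LEAST j. i \<le> j \<or> down j)"
  show "m \<le> i"
    unfolding m_def by (rule Least_le) simp
  show "\<exists>x. p ! j = p ! Suc j @ [x]" if "j < m" for j
  proof -
    from not_less_Least[OF that[unfolded m_def]] have "j < i" "\<not> down j" by auto
    with sawsD(6)[OF p] show ?thesis
      unfolding tree_adj_def down_def by blast
  qed
  have "down (m + n)" if "m + n < i" for n
    using that
  proof (induction n)
    case 0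
    from LeastI[of "\<lambda>j. i \<le> j \<or> down j" i] show ?case
      using 0 unfolding m_def by auto
  next
    case (Suc n)
    then show ?case
      using saw_tree_down_step_persists[OF p, of "m + n"] unfolding down_def by auto
  qed
  then show "\<exists>x. p ! Suc j = p ! j @ [x]" if "m \<le> j" "j < i" for j
    using that unfolding down_def by (metis le_add_diff_inverse)
qed

lemma saw_tree_turn_eq_longest_common_prefix:
  assumes p: "p \<in> saws V tree_adj v i" and "m \<le> i" "m \<le> length v"
    and up_path: "\<And>j. j \<le> m \<Longrightarrow> p ! j = take (length v - j) v"
    and down_path: "\<And>j. m \<le> j \<Longrightarrow> j \<le> i \<Longrightarrow> p ! j = take (length v - m + (j - m)) (last p)"
    and len_last: "length (last p) = length v - m + (i - m)"
  shows "p ! m = longest_common_prefix v (last p)"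
proof -
  let ?n = "length v - m"
  have pm_v: "p ! m = take ?n v" using up_path by simp
  have pm_last: "p ! m = take ?n (last p)" using down_path[of m] \<open>m \<le> i\<close> by simp
  have "?n = length v \<or> ?n = length (last p) \<or> v ! ?n \<noteq> last p ! ?n"
  proof (cases "0 < m \<and> m < i")
    case True
    have "p ! (m - 1) \<noteq> p ! Suc m"
      using sawsD(1,3)[OF p] True by (subst nth_eq_iff_index_eq) auto
    moreover have "p ! (m - 1) = take (Suc ?n) v"
      using up_path[of "m - 1"] True \<open>m \<le> length v\<close> by (simp add: Suc_diff_le)
    moreover have "p ! Suc m = take (Suc ?n) (last p)"
      using down_path[of "Suc m"] True by simp
    ultimately have "take (Suc ?n) v \<noteq> take (Suc ?n) (last p)" by simp
    moreover have "?n < length v" "?n < length (last p)"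
      using True len_last \<open>m \<le> length v\<close> by auto
    ultimately show ?thesis
      using pm_v pm_last by (metis take_Suc_conv_app_nth)
  next
    case False
    with len_last show ?thesis by auto
  qed
  then have "longest_common_prefix v (last p) = take ?n v"
    using pm_v pm_last len_last by (intro longest_common_prefix_eq_take) auto
  with pm_v show ?thesis by simp
qed

lemma saw_tree_shape:
  assumes p: "p \<in> saws V tree_adj v i"
  obtains m where "m \<le> i" "m \<le> length v"
    and "\<And>j. j \<le> m \<Longrightarrow> p ! j = take (length v - j) v"
    and "\<And>j. m \<le> j \<Longrightarrow> j \<le> i \<Longrightarrow> p ! j = take (length v - m + (j - m)) (last p)"
    and "length (last p) = length v - m + (i - m)"
    and "p ! m = longest_common_prefix v (last p)"
proof -
  obtain m where "m \<le> i"
    and up: "\<And>j. j < m \<Longrightarrow> \<exists>x. p ! j = p ! Suc j @ [x]"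
    and down: "\<And>j. m \<le> j \<Longrightarrow> j < i \<Longrightarrow> \<exists>x. p ! Suc j = p ! j @ [x]"
    using saw_tree_up_then_down[OF p] by blast
  have up_path: "p ! j = take (length v - j) v" if "j \<le> m" for j
    using snoc_chain_take[OF up that] sawsD(2)[OF p] by simp
  have "m \<le> length v"
  proof (cases m)
    case (Suc m')
    with up[of m'] obtain x where "p ! m' = p ! m @ [x]" by auto
    with up_path[of m'] Suc show ?thesis by (cases "m' < length v") auto
  qed simp
  have suffix: "\<exists>zs. last p = p ! j @ zs \<and> length zs = i - j" if "m \<le> j" "j \<le> i" for j
    using snoc_chain_append[of j i p, OF down \<open>j \<le> i\<close>] that sawsD(5)[OF p] by simp
  have len_pm: "length (p ! m) = length v - m"
    using up_path[of m] by simp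
  have len_last: "length (last p) = length v - m + (i - m)"
    using suffix[of m] \<open>m \<le> i\<close> len_pm by auto
  have down_path: "p ! j = take (length v - m + (j - m)) (last p)" if j: "m \<le> j" "j \<le> i" for j
  proof -
    obtain zs where "last p = p ! j @ zs" "length zs = i - j"
      using suffix[OF j] by blast
    with len_last j show ?thesis by auto
  qed
  show ?thesis
    by (rule that[OF \<open>m \<le> i\<close> \<open>m \<le> length v\<close> up_path down_path len_last
          saw_tree_turn_eq_longest_common_prefix[OF p \<open>m \<le> i\<close> \<open>m \<le> length v\<close> up_path down_path len_last]])
qed

lemma saw_tree_determined_by_last:
  assumes p: "p \<in> saws V tree_adj v i" and q: "q \<in> saws V tree_adj v i'"
    and "last p = last q"
  shows "p = q"
proof -
  obtain m where "m \<le> i" "m \<le> length v"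
    and p_up: "\<And>j. j \<le> m \<Longrightarrow> p ! j = take (length v - j) v"
    and p_down: "\<And>j. m \<le> j \<Longrightarrow> j \<le> i \<Longrightarrow> p ! j = take (length v - m + (j - m)) (last p)"
    and "length (last p) = length v - m + (i - m)"
    and "p ! m = longest_common_prefix v (last p)"
    using saw_tree_shape[OF p] by blast
  obtain m' where "m' \<le> i'" "m' \<le> length v"
    and q_up: "\<And>j. j \<le> m' \<Longrightarrow> q ! j = take (length v - j) v"
    and q_down: "\<And>j. m' \<le> j \<Longrightarrow> j \<le> i' \<Longrightarrow> q ! j = take (length v - m' + (j - m')) (last q)"
    and "length (last q) = length v - m' + (i' - m')"
    and "q ! m' = longest_common_prefix v (last q)"
    using saw_tree_shape[OF q] by blast
  have "length (p ! m) = length (q ! m')"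
    using \<open>p ! m = _\<close> \<open>q ! m' = _\<close> \<open>last p = last q\<close> by simp
  with p_up[of m] q_up[of m'] \<open>m \<le> length v\<close> \<open>m' \<le> length v\<close> have "m' = m"
    by simp
  with \<open>length (last p) = _\<close> \<open>length (last q) = _\<close> \<open>last p = last q\<close> \<open>m \<le> i\<close> \<open>m' \<le> i'\<close>
  have "i' = i"
    by simp
  show "p = q"
  proof (rule nth_equalityI)
    show "length p = length q"
      using sawsD(1)[OF p] sawsD(1)[OF q] \<open>i' = i\<close> by simp
    show "p ! j = q ! j" if "j < length p" for j
      using that p_up q_up p_down q_down sawsD(1)[OF p] \<open>m' = m\<close> \<open>i' = i\<close> \<open>last p = last q\<close>
      by (cases "j \<le> m") auto
  qed
qed

lemma N_le_tree_adj_le_card: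
  assumes "finite V"
  shows "N_le V tree_adj v l \<le> card V"
  unfolding N_le_def
proof (rule card_inj_on_le)
  show "inj_on last (\<Union>i\<in>{1..l}. saws V tree_adj v i)"
    by (intro inj_onI) (auto intro: saw_tree_determined_by_last)
  show "last ` (\<Union>i\<in>{1..l}. saws V tree_adj v i) \<subseteq> V"
    using sawsD(1,4,5) by fastforce
qed fact

lemma finite_tree_verts: "finite (tree_verts \<Delta> k)"
proof -
  have "tree_verts \<Delta> k = {xs. set xs \<subseteq> {0..<\<Delta> - 1} \<and> length xs \<le> k}"
    unfolding tree_verts_def by auto
  then show ?thesis
    using finite_lists_length_le[of "{0..<\<Delta> - 1}" k] by simp
qed

theorem lemma3p1:
  fixes \<Delta> :: nat and d :: real
  assumes "\<Delta> \<ge> 3" and "d > 1"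
  shows "mu_log_le (tree_family \<Delta>) d"
  unfolding mu_log_le_def
proof (rule exI[of _ "1 / ln d"], rule exI[of _ 1], clarify)
  fix V E v l
  assume "(V, E) \<in> tree_family \<Delta>" and "v \<in> V"
    and l: "1 / ln d * ln (real (card V)) \<le> real l"
  then obtain k where V: "V = tree_verts \<Delta> k" and E: "E = tree_adj"
    unfolding tree_family_def by auto
  with \<open>v \<in> V\<close> have "card V > 0"
    using finite_tree_verts card_gt_0_iff by blast
  have "real (card V) = exp (ln (real (card V)))"
    using \<open>card V > 0\<close> by simp
  also have "\<dots> \<le> exp (real l * ln d)"
    using l \<open>d > 1\<close> by (simp add: field_simps)
  also have "\<dots> = d ^ l"
    using \<open>d > 1\<close> by (simp add: exp_of_nat_mult)
  finally have "real (card V) \<le> d ^ l" .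
  moreover have "N_le V E v l \<le> card V"
    unfolding V E by (rule N_le_tree_adj_le_card[OF finite_tree_verts])
  ultimately show "real (N_le V E v l) \<le> 1 * d ^ l"
    by simp
qed

end
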